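(* The vector space $M(\beta)/(Z_1,\dots,Z_d)M(\beta)$ is finite dimensional.
   Context: $N\cong\mathbb Z^d$ lattice, $M=\mathrm{Hom}(N,\mathbb Z)$ with basis $m_1,\dots,m_d$; $\mathcal A=\{v_1,\dots,v_n\}\subset N$ generating $N$ with a homomorphism $\mathrm h:N\to\mathbb Z$, $\mathrm h(v_j)=1$; $K=\mathbb R_{\ge0}\mathrm{Conv}(\mathcal A)$; $\Sigma$ the simplicial fan supported on $K$ from a regular triangulation of $\mathrm{Conv}(\mathcal A)$ with vertices in $\mathcal A$; $\beta\in N$. $\mathbb C[K,\Sigma]$: basis $x^w$ ($w\in K\cap N$), $x^{w_1}x^{w_2}=x^{w_1+w_2}$ if a cone of $\Sigma$ contains both, else $0$. $Z_i=\sum_{j:\mathbb R_{\ge0}v_j\in\Sigma}\langle m_i,v_j\rangle x^{v_j}$. $\mathrm{Box}(\Sigma)$: $v\in N$, $v=\sum q_jv_j$, $0\le q_j<1$, $q_j=0$ unless $v_j$ spans a ray of one fixed maximal cone; $\sigma(v)$ smallest cone containing $v$. $R$: subring generated by $x^{v_j}$, $\mathbb R_{\ge0}v_j\in\Sigma$. $M(\beta)$: $R$-submodule generated by $x^v\prod_{j:r_j<0,\ \mathbb R_{\ge0}v_j\in\Sigma,\ \mathbb R_{\ge0}v_j\not\prec\sigma(v)}x^{v_j}$ over all $v\in\mathrm{Box}(\Sigma)$, $r\in\mathbb Z^n$ with $v+\sum r_jv_j=\beta$, $r_j\ge0$ whenever $\mathbb R_{\ge0}v_j\notin\Sigma$.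 *)

theory Defs
  imports "HOL-Analysis.Analysis"
begin

text \<open>The lattice N is Z^d, realised inside real^'d (d = CARD('d)); M = Hom(N,Z)
  with the dual basis m_i, so that the pairing of m_i with v is the coordinate v $ i.\<close>

definition latN :: "(real^'d) set" where
  "latN = {x. \<forall>i. x $ i \<in> \<int>}"

definition generates_lattice :: "(real^'d) set \<Rightarrow> bool" where
  "generates_lattice A \<longleftrightarrow>
     (\<forall>x\<in>latN. \<exists>c :: real^'d \<Rightarrow> int. x = (\<Sum>a\<in>A. of_int (c a) *\<^sub>R a))"

definition conic :: "(real^'d) set \<Rightarrow> (real^'d) set" where
  "conic \<tau> = {(\<Sum>a\<in>\<tau>. c a *\<^sub>R a) | c. \<forall>a\<in>\<tau>. 0 \<le> c a}"

definition ray :: "real^'d \<Rightarrow> (real^'d) set" where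
  "ray v = {t *\<^sub>R v | t. 0 \<le> t}"

definition coneK :: "(real^'d) set \<Rightarrow> (real^'d) set" where
  "coneK A = {t *\<^sub>R x | t x. 0 \<le> t \<and> x \<in> convex hull A}"

text \<open>A triangulation of Conv(A) with vertices in A, given by the vertex sets of its
  maximal simplices.\<close>
definition is_triangulation :: "(real^'d) set \<Rightarrow> (real^'d) set set \<Rightarrow> bool" where
  "is_triangulation A T \<longleftrightarrow>
     finite T \<and>
     (\<forall>S\<in>T. S \<subseteq> A \<and> \<not> affine_dependent S \<and>
              aff_dim (convex hull S) = aff_dim (convex hull A)) \<and>
     (\<Union>S\<in>T. convex hull S) = convex hull A \<and>
     (\<forall>S1\<in>T. \<forall>S2\<in>T. convex hull S1 \<inter> convex hull S2 = convex hull (S1 \<inter> S2))"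

text \<open>Regularity: induced by a height function \<omega> on A (the maximal cells are exactly
  the projections of the lower facets of the lifted configuration).\<close>
definition is_regular_triangulation :: "(real^'d) set \<Rightarrow> (real^'d) set set \<Rightarrow> bool" where
  "is_regular_triangulation A T \<longleftrightarrow>
     is_triangulation A T \<and>
     (\<exists>\<omega> :: real^'d \<Rightarrow> real. \<forall>S\<in>T. \<exists>(\<psi>::real^'d) (c::real).
        (\<forall>a\<in>S. \<psi> \<bullet> a + c = \<omega> a) \<and> (\<forall>a\<in>A - S. \<psi> \<bullet> a + c < \<omega> a))"

definition fan :: "(real^'d) set set \<Rightarrow> (real^'d) set set" where
  "fan T = {conic \<tau> | \<tau>. \<exists>S\<in>T. \<tau> \<subseteq> S}"

text \<open>Elements of C[K,Sigma] are finitely supported functions N -> C supported on K \<inter> N;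
  x^w is the indicator of w.\<close>
definition mono :: "real^'d \<Rightarrow> (real^'d \<Rightarrow> complex)" where
  "mono w = (\<lambda>u. if u = w then 1 else 0)"

definition supp :: "(real^'d \<Rightarrow> complex) \<Rightarrow> (real^'d) set" where
  "supp f = {x. f x \<noteq> 0}"

definition ring_KSigma :: "(real^'d) set \<Rightarrow> (real^'d) set set \<Rightarrow> (real^'d \<Rightarrow> complex) set" where
  "ring_KSigma K \<Sigma> = {f. finite (supp f) \<and> supp f \<subseteq> K \<inter> latN}"

text \<open>Multiplication: bilinear extension of x^w1 x^w2 = x^(w1+w2) if some cone of Sigma
  contains both w1 and w2, and 0 otherwise.\<close>
definition fmul :: "(real^'d) set set \<Rightarrow> (real^'d \<Rightarrow> complex) \<Rightarrow> (real^'d \<Rightarrow> complex) \<Rightarrow> (real^'d \<Rightarrow> complex)" where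
  "fmul \<Sigma> f g = (\<lambda>w. \<Sum>p\<in>{p \<in> supp f \<times> supp g. fst p + snd p = w \<and>
                                   (\<exists>\<sigma>\<in>\<Sigma>. fst p \<in> \<sigma> \<and> snd p \<in> \<sigma>)}.
                      f (fst p) * g (snd p))"

fun lprod :: "(real^'d) set set \<Rightarrow> (real^'d \<Rightarrow> complex) list \<Rightarrow> (real^'d \<Rightarrow> complex)" where
  "lprod \<Sigma> [] = mono 0"
| "lprod \<Sigma> (f # fs) = fmul \<Sigma> f (lprod \<Sigma> fs)"

definition cspan :: "(real^'d \<Rightarrow> complex) set \<Rightarrow> (real^'d \<Rightarrow> complex) set" where
  "cspan S = {f. \<exists>F c. finite F \<and> F \<subseteq> S \<and> f = (\<lambda>u. \<Sum>s\<in>F. c s * s u)}"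

definition Zgen :: "(real^'d) set \<Rightarrow> (real^'d) set set \<Rightarrow> 'd \<Rightarrow> (real^'d \<Rightarrow> complex)" where
  "Zgen A \<Sigma> i = (\<lambda>u. \<Sum>a\<in>{a\<in>A. ray a \<in> \<Sigma>}. complex_of_real (a $ i) * mono a u)"

inductive_set Rring :: "(real^'d) set \<Rightarrow> (real^'d) set set \<Rightarrow> (real^'d \<Rightarrow> complex) set"
  for A :: "(real^'d) set" and \<Sigma> :: "(real^'d) set set" where
  one: "mono 0 \<in> Rring A \<Sigma>"
| gen: "a \<in> A \<Longrightarrow> ray a \<in> \<Sigma> \<Longrightarrow> mono a \<in> Rring A \<Sigma>"
| add: "f \<in> Rring A \<Sigma> \<Longrightarrow> g \<in> Rring A \<Sigma> \<Longrightarrow> (\<lambda>u. f u + g u) \<in> Rring A \<Sigma>"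
| smult: "f \<in> Rring A \<Sigma> \<Longrightarrow> (\<lambda>u. c * f u) \<in> Rring A \<Sigma>"
| mult: "f \<in> Rring A \<Sigma> \<Longrightarrow> g \<in> Rring A \<Sigma> \<Longrightarrow> fmul \<Sigma> f g \<in> Rring A \<Sigma>"

definition Box :: "(real^'d) set set \<Rightarrow> (real^'d) set" where
  "Box T = {v \<in> latN. \<exists>S\<in>T. \<exists>q :: real^'d \<Rightarrow> real.
              (\<forall>a\<in>S. 0 \<le> q a \<and> q a < 1) \<and> v = (\<Sum>a\<in>S. q a *\<^sub>R a)}"

definition min_cone :: "(real^'d) set set \<Rightarrow> real^'d \<Rightarrow> (real^'d) set" where
  "min_cone \<Sigma> v = (THE \<sigma>. \<sigma> \<in> \<Sigma> \<and> v \<in> \<sigma> \<and> (\<forall>\<tau>\<in>\<Sigma>. v \<in> \<tau> \<longrightarrow> \<sigma> \<subseteq> \<tau>))"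

text \<open>Generators of M(beta): x^v times the product of x^(v_j) over the indicated j
  (the product is taken in any order, as a list enumerating the index set).\<close>
definition Mgens :: "(real^'d) set \<Rightarrow> (real^'d) set set \<Rightarrow> real^'d \<Rightarrow> (real^'d \<Rightarrow> complex) set" where
  "Mgens A T \<beta> = {fmul (fan T) (mono v) (lprod (fan T) (map mono xs)) | v r xs.
      v \<in> Box T \<and>
      v + (\<Sum>a\<in>A. of_int (r a) *\<^sub>R a) = \<beta> \<and>
      (\<forall>a\<in>A. ray a \<notin> fan T \<longrightarrow> 0 \<le> (r a :: int)) \<and>
      distinct xs \<and>
      set xs = {a\<in>A. r a < 0 \<and> ray a \<in> fan T \<and> \<not> (ray a face_of min_cone (fan T) v)}}"

inductive_set Mbeta :: "(real^'d) set \<Rightarrow> (real^'d) set set \<Rightarrow> real^'d \<Rightarrow> (real^'d \<Rightarrow> complex) set"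
  for A :: "(real^'d) set" and T :: "(real^'d) set set" and \<beta> :: "real^'d" where
  gen: "g \<in> Mgens A T \<beta> \<Longrightarrow> g \<in> Mbeta A T \<beta>"
| zero: "(\<lambda>u. 0) \<in> Mbeta A T \<beta>"
| add: "f \<in> Mbeta A T \<beta> \<Longrightarrow> g \<in> Mbeta A T \<beta> \<Longrightarrow> (\<lambda>u. f u + g u) \<in> Mbeta A T \<beta>"
| rmult: "r \<in> Rring A (fan T) \<Longrightarrow> f \<in> Mbeta A T \<beta> \<Longrightarrow> fmul (fan T) r f \<in> Mbeta A T \<beta>"

definition ZM :: "(real^'d) set \<Rightarrow> (real^'d) set set \<Rightarrow> real^'d \<Rightarrow> (real^'d \<Rightarrow> complex) set" where
  "ZM A T \<beta> = cspan {fmul (fan T) (Zgen A (fan T) i) m | i m. m \<in> Mbeta A T \<beta>}"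

definition fin_dim_quotient :: "(real^'d \<Rightarrow> complex) set \<Rightarrow> (real^'d \<Rightarrow> complex) set \<Rightarrow> bool" where
  "fin_dim_quotient V W \<longleftrightarrow>
     (\<exists>B. finite B \<and> B \<subseteq> V \<and> (\<forall>m\<in>V. \<exists>b\<in>cspan B. (\<lambda>u. m u - b u) \<in> W))"

end

theory Submission
  imports Defs
begin

text \<open>
  \<open>M(\<beta>)\<close> is spanned by monomials \<open>x\<^sup>w\<close> with \<open>w = g + \<Sum>\<^sub>b \<nu>\<^sub>b b\<close>, where \<open>x\<^sup>g\<close> is a
  generator, \<open>g\<close> lies in the cone of a simplex \<open>S\<close> and the natural numbers \<open>\<nu>\<^sub>b\<close> are supported
  on \<open>S\<close>. Multiplication by \<open>R\<close> preserves this shape because the cones of the fan meet in common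
  faces: the vertices carrying positive weight in a point of two cones belong to both simplices.
  Only finitely many such exponents have all \<open>\<nu>\<^sub>b \<le> |A| + 1\<close>.

  If \<open>\<nu>\<^sub>a\<close> is larger, put \<open>p = w - a\<close>, let \<open>F\<close> be the set of vertices with positive weight
  in \<open>p\<close> and choose \<open>\<psi>\<close> with \<open>\<psi> \<bullet> b = [b = a]\<close> on the linearly independent set \<open>F\<close>. Then
  \<open>\<Sum>\<^sub>i \<psi>\<^sub>i Z\<^sub>i x\<^sup>p \<in> (Z)M(\<beta>)\<close> is \<open>x\<^sup>w\<close> plus multiples of \<open>x\<^sup>p\<^sup>+\<^sup>b\<close> for vertices \<open>b \<notin> F\<close>
  sharing a cone with \<open>p\<close>. Each \<open>p + b\<close> has the same shape with one copy of \<open>a\<close> less and the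
  larger support \<open>F \<union> {b}\<close>, which still lies in a simplex; so after at most \<open>|A|\<close> such steps
  no neighbours remain and \<open>x\<^sup>w \<in> (Z)M(\<beta>)\<close>. Hence the finitely many small monomials span
  \<open>M(\<beta>)\<close> modulo \<open>(Z)M(\<beta>)\<close>.
\<close>

section \<open>Conic combinations and linear independence\<close>

lemma conicI: "(\<And>a. a \<in> S \<Longrightarrow> 0 \<le> c a) \<Longrightarrow> (\<Sum>a\<in>S. c a *\<^sub>R a) \<in> conic S"
  unfolding conic_def by blast

lemma conicE:
  assumes "x \<in> conic S"
  obtains c where "\<forall>a\<in>S. 0 \<le> c a" "x = (\<Sum>a\<in>S. c a *\<^sub>R a)"
  using assms unfolding conic_def by blast

lemma zero_in_conic: "0 \<in> conic S"
  using conicI[of S "\<lambda>_. 0"] by simp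

lemma conic_add:
  assumes "x \<in> conic S" "y \<in> conic S"
  shows "x + y \<in> conic S"
proof -
  obtain c d where "\<forall>a\<in>S. 0 \<le> c a" "x = (\<Sum>a\<in>S. c a *\<^sub>R a)"
    and "\<forall>a\<in>S. 0 \<le> d a" "y = (\<Sum>a\<in>S. d a *\<^sub>R a)"
    using assms by (elim conicE)
  then show ?thesis
    using conicI[of S "\<lambda>a. c a + d a"] by (simp add: scaleR_add_left sum.distrib)
qed

lemma conic_scaleR: "x \<in> conic S \<Longrightarrow> 0 \<le> t \<Longrightarrow> t *\<^sub>R x \<in> conic S"
  by (elim conicE) (simp add: scaleR_sum_right conicI)

lemma conic_sum: "(\<And>p. p \<in> P \<Longrightarrow> f p \<in> conic S) \<Longrightarrow> sum f P \<in> conic S"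
  by (induction P rule: infinite_finite_induct) (auto simp: zero_in_conic conic_add)

lemma conic_inc:
  assumes "finite S" "a \<in> S"
  shows "a \<in> conic S"
proof -
  have "(\<Sum>s\<in>S. (if s = a then 1 else 0) *\<^sub>R s) = (\<Sum>s\<in>S. if s = a then s else 0)"
    by (rule sum.cong) auto
  then show ?thesis
    using conicI[of S "\<lambda>s. if s = a then 1 else 0"] assms by simp
qed

lemma conic_mono: "finite S \<Longrightarrow> F \<subseteq> S \<Longrightarrow> conic F \<subseteq> conic S"
  by (auto elim!: conicE intro!: conic_sum conic_scaleR[OF conic_inc])

lemma convex_hull_subset_conic: "finite S \<Longrightarrow> convex hull S \<subseteq> conic S"
  by (auto simp: convex_hull_finite intro: conicI)

lemma independent_coefficients_unique:
  fixes S :: "'a::euclidean_space set"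
  assumes "independent S" "(\<Sum>s\<in>S. f s *\<^sub>R s) = (\<Sum>s\<in>S. g s *\<^sub>R s)" "s \<in> S"
  shows "f s = g s"
proof -
  have "(\<Sum>s\<in>S. (f s - g s) *\<^sub>R s) = 0"
    using assms(2) by (simp add: scaleR_diff_left sum_subtractf)
  then show ?thesis
    using assms(1,3) unfolding independent_explicit by auto
qed

lemma independent_dual_vector:
  fixes F :: "'a::euclidean_space set"
  assumes "independent F"
  obtains \<psi> where "\<forall>b\<in>F. \<psi> \<bullet> b = (if b = a then 1 else 0)"
proof -
  obtain g :: "'a \<Rightarrow> real" where g: "linear g" "\<And>b. b \<in> F \<Longrightarrow> g b = (if b = a then 1 else 0)"
    using linear_independent_extend[OF assms, of "\<lambda>b. if b = a then 1 else 0"] by auto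
  have "b \<bullet> adjoint g 1 = g b" for b
    using adjoint_works[OF g(1), of b 1] by simp
  then show ?thesis
    using g(2) that[of "adjoint g 1"] by (simp add: inner_commute)
qed

lemma independent_if_affine_independent_in_hyperplane:
  fixes S :: "'a::euclidean_space set"
  assumes "\<not> affine_dependent S" "\<And>s. s \<in> S \<Longrightarrow> h \<bullet> s = 1"
  shows "independent S"
proof
  assume "dependent S"
  have fin: "finite S"
    using aff_independent_finite assms(1) by blast
  then obtain u where u: "\<exists>v\<in>S. u v \<noteq> 0" "(\<Sum>v\<in>S. u v *\<^sub>R v) = 0"
    using \<open>dependent S\<close> dependent_finite[OF fin] by auto
  have "sum u S = h \<bullet> (\<Sum>v\<in>S. u v *\<^sub>R v)"
    using assms(2) by (simp add: inner_sum_right)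
  then have "sum u S = 0"
    using u(2) by simp
  then show False
    using assms(1) u affine_dependent_explicit_finite[OF fin] by blast
qed

lemma sum_scaleR_extend:
  fixes S :: "'a::real_vector set"
  assumes "finite S" "F \<subseteq> S"
  shows "(\<Sum>s\<in>F. c s *\<^sub>R s) = (\<Sum>s\<in>S. (if s \<in> F then c s else 0) *\<^sub>R s)"
  using assms by (intro sum.mono_neutral_cong_left) auto

lemma sum_scaleR_exchange:
  fixes F :: "'a::real_vector set"
  assumes "finite F" "a \<in> F" "b \<notin> F"
  shows "(\<Sum>s\<in>insert b F. (c(a := c a - 1, b := 1)) s *\<^sub>R s) = b + (\<Sum>s\<in>F. c s *\<^sub>R s) - a"
proof -
  have "(\<Sum>s\<in>F. (c(a := c a - 1, b := 1)) s *\<^sub>R s) = (\<Sum>s\<in>F. (c(a := c a - 1)) s *\<^sub>R s)"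
    using assms(3) by (intro sum.cong) auto
  also have "\<dots> = (\<Sum>s\<in>F. c s *\<^sub>R s) - a"
    by (simp add: sum.remove[OF assms(1,2)] scaleR_diff_left algebra_simps)
  finally show ?thesis
    using assms(1,3) by simp
qed

section \<open>Monomials and the product of \<open>\<complex>[K,\<Sigma>]\<close>\<close>

lemma mono_apply: "mono x u = (if u = x then 1 else 0)"
  unfolding mono_def by simp

lemma mono_add_apply: "mono (b + p) w = (if w - p = b then 1 else 0)"
  unfolding mono_apply by (simp add: diff_eq_eq)

lemma sum_mono_add_apply:
  assumes "finite N"
  shows "(\<Sum>b\<in>N. c b * mono (b + p) w) = (if w - p \<in> N then c (w - p) else 0)"
proof -
  have "(\<Sum>b\<in>N. c b * mono (b + p) w) = (\<Sum>b\<in>N. if w - p = b then c b else 0)"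
    by (rule sum.cong) (simp_all add: mono_add_apply)
  then show ?thesis
    using assms by simp
qed

lemma supp_mono: "supp (mono x) = {x}"
  unfolding supp_def mono_def by auto

lemma fmul_mono_right:
  "fmul \<Sigma> f (mono y) = (\<lambda>w. if \<exists>\<sigma>\<in>\<Sigma>. w - y \<in> \<sigma> \<and> y \<in> \<sigma> then f (w - y) else 0)"
proof
  fix w
  let ?C = "\<exists>\<sigma>\<in>\<Sigma>. w - y \<in> \<sigma> \<and> y \<in> \<sigma>"
  let ?P = "{p \<in> supp f \<times> supp (mono y). fst p + snd p = w \<and> (\<exists>\<sigma>\<in>\<Sigma>. fst p \<in> \<sigma> \<and> snd p \<in> \<sigma>)}"
  have "?P = (if f (w - y) \<noteq> 0 \<and> ?C then {(w - y, y)} else {})"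
  proof (intro set_eqI iffI)
    fix p assume "p \<in> ?P"
    then obtain x where "p = (x, y)" "x = w - y" "f x \<noteq> 0" "\<exists>\<sigma>\<in>\<Sigma>. x \<in> \<sigma> \<and> y \<in> \<sigma>"
      unfolding supp_mono by (force simp: supp_def eq_diff_eq)
    then show "p \<in> (if f (w - y) \<noteq> 0 \<and> ?C then {(w - y, y)} else {})"
      by simp
  next
    fix p assume "p \<in> (if f (w - y) \<noteq> 0 \<and> ?C then {(w - y, y)} else {})"
    then show "p \<in> ?P"
      unfolding supp_mono by (auto simp: supp_def split: if_splits)
  qed
  then show "fmul \<Sigma> f (mono y) w = (if ?C then f (w - y) else 0)"
    unfolding fmul_def by (simp add: mono_apply)
qed

lemma fmul_mono_mono:
  "fmul \<Sigma> (mono x) (mono y) = (if \<exists>\<sigma>\<in>\<Sigma>. x \<in> \<sigma> \<and> y \<in> \<sigma> then mono (x + y) else (\<lambda>_. 0))"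
proof
  fix w
  show "fmul \<Sigma> (mono x) (mono y) w = (if \<exists>\<sigma>\<in>\<Sigma>. x \<in> \<sigma> \<and> y \<in> \<sigma> then mono (x + y) else (\<lambda>_. 0)) w"
    unfolding fmul_mono_right by (cases "w = x + y") (simp_all add: mono_apply diff_eq_eq)
qed

lemma inj_mono: "inj mono"
  by (rule injI) (metis mono_def zero_neq_one)

lemma fmul_zero_right: "fmul \<Sigma> f (\<lambda>_. 0) = (\<lambda>_. 0)"
  unfolding fmul_def supp_def by simp

lemma lprod_monos: "lprod \<Sigma> (map mono xs) \<in> insert (\<lambda>_. 0) (range mono)"
proof (induction xs)
  case (Cons x xs)
  then consider "lprod \<Sigma> (map mono xs) = (\<lambda>_. 0)" | y where "lprod \<Sigma> (map mono xs) = mono y"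
    by blast
  then show ?case
    by cases (simp_all add: fmul_zero_right fmul_mono_mono)
qed simp

lemma supp_fmul:
  "supp (fmul \<Sigma> f g) \<subseteq> {x + y | x y. x \<in> supp f \<and> y \<in> supp g \<and> (\<exists>\<sigma>\<in>\<Sigma>. x \<in> \<sigma> \<and> y \<in> \<sigma>)}"
proof
  fix w assume w: "w \<in> supp (fmul \<Sigma> f g)"
  have "{p \<in> supp f \<times> supp g. fst p + snd p = w \<and> (\<exists>\<sigma>\<in>\<Sigma>. fst p \<in> \<sigma> \<and> snd p \<in> \<sigma>)} \<noteq> {}"
  proof
    assume "{p \<in> supp f \<times> supp g. fst p + snd p = w \<and> (\<exists>\<sigma>\<in>\<Sigma>. fst p \<in> \<sigma> \<and> snd p \<in> \<sigma>)} = {}"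
    then have "fmul \<Sigma> f g w = 0"
      unfolding fmul_def by (simp only: sum.empty)
    then show False
      using w unfolding supp_def by blast
  qed
  then obtain p where p: "p \<in> supp f \<times> supp g" "fst p + snd p = w" "\<exists>\<sigma>\<in>\<Sigma>. fst p \<in> \<sigma> \<and> snd p \<in> \<sigma>"
    by blast
  then show "w \<in> {x + y | x y. x \<in> supp f \<and> y \<in> supp g \<and> (\<exists>\<sigma>\<in>\<Sigma>. x \<in> \<sigma> \<and> y \<in> \<sigma>)}"
    by (intro CollectI exI[of _ "fst p"] exI[of _ "snd p"]) (simp add: mem_Times_iff)
qed

lemma finite_supp_fmul:
  assumes "finite (supp f)" "finite (supp g)"
  shows "finite (supp (fmul \<Sigma> f g))"
proof -
  have "supp (fmul \<Sigma> f g) \<subseteq> (\<lambda>(x, y). x + y) ` (supp f \<times> supp g)"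
    using supp_fmul by (fastforce simp: image_iff)
  moreover have "finite ((\<lambda>(x, y). x + y) ` (supp f \<times> supp g))"
    using assms by simp
  ultimately show ?thesis
    by (rule finite_subset)
qed

lemma supp_add: "supp (\<lambda>u. f u + g u) \<subseteq> supp f \<union> supp g"
  unfolding supp_def by auto

lemma supp_scale: "supp (\<lambda>u. c * f u) \<subseteq> supp f"
  unfolding supp_def by auto

lemma finite_supp_expansion:
  assumes "finite (supp f)"
  shows "f = (\<lambda>u. \<Sum>w\<in>supp f. f w * mono w u)"
proof
  fix u
  have "(\<Sum>w\<in>supp f. f w * mono w u) = (\<Sum>w\<in>supp f. if u = w then f w else 0)"
    by (rule sum.cong) (auto simp: mono_apply)
  also have "\<dots> = f u"
    using assms by (simp add: supp_def)
  finally show "f u = (\<Sum>w\<in>supp f. f w * mono w u)" ..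
qed

lemma cspan_base: "f \<in> X \<Longrightarrow> f \<in> cspan X"
  unfolding cspan_def by (intro CollectI exI[of _ "{f}"] exI[of _ "\<lambda>_. 1"]) simp

lemma cspanI: "finite F \<Longrightarrow> F \<subseteq> X \<Longrightarrow> f = (\<lambda>u. \<Sum>s\<in>F. c s * s u) \<Longrightarrow> f \<in> cspan X"
  unfolding cspan_def by (intro CollectI exI conjI)

lemma cspanE:
  assumes "f \<in> cspan X"
  obtains F c where "finite F" "F \<subseteq> X" "f = (\<lambda>u. \<Sum>s\<in>F. c s * s u)"
  using assms unfolding cspan_def by (elim CollectE exE conjE)

lemma cspan_add:
  assumes "f \<in> cspan X" "g \<in> cspan X"
  shows "(\<lambda>u. f u + g u) \<in> cspan X"
proof -
  obtain F c where F: "finite F" "F \<subseteq> X" "f = (\<lambda>u. \<Sum>s\<in>F. c s * s u)"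
    using assms(1) by (rule cspanE)
  obtain G d where G: "finite G" "G \<subseteq> X" "g = (\<lambda>u. \<Sum>s\<in>G. d s * s u)"
    using assms(2) by (rule cspanE)
  have "(\<Sum>s\<in>F \<union> G. (if s \<in> F then c s else 0) * s u) = (\<Sum>s\<in>F. c s * s u)" for u
    using F(1) G(1) by (intro sum.mono_neutral_cong_right) auto
  moreover have "(\<Sum>s\<in>F \<union> G. (if s \<in> G then d s else 0) * s u) = (\<Sum>s\<in>G. d s * s u)" for u
    using F(1) G(1) by (intro sum.mono_neutral_cong_right) auto
  ultimately have "(\<lambda>u. f u + g u)
      = (\<lambda>u. \<Sum>s\<in>F \<union> G. ((if s \<in> F then c s else 0) + (if s \<in> G then d s else 0)) * s u)"
    unfolding F(3) G(3) by (simp add: distrib_right sum.distrib)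
  then show ?thesis
    using F(1,2) G(1,2) by (intro cspanI[of "F \<union> G"]) auto
qed

lemma cspan_scale:
  assumes "f \<in> cspan X"
  shows "(\<lambda>u. a * f u) \<in> cspan X"
proof -
  obtain F c where F: "finite F" "F \<subseteq> X" "f = (\<lambda>u. \<Sum>s\<in>F. c s * s u)"
    using assms by (rule cspanE)
  have "(\<lambda>u. a * f u) = (\<lambda>u. \<Sum>s\<in>F. (a * c s) * s u)"
    unfolding F(3) by (simp add: sum_distrib_left mult.assoc)
  then show ?thesis
    using F(1,2) by (rule cspanI[rotated -1])
qed

lemma cspan_sum:
  assumes "finite I" "\<And>i. i \<in> I \<Longrightarrow> f i \<in> cspan X"
  shows "(\<lambda>u. \<Sum>i\<in>I. c i * f i u) \<in> cspan X"
  using assms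
proof (induction I rule: finite_induct)
  case empty
  show ?case
    by (rule cspanI[of "{}"]) simp_all
next
  case (insert i I)
  then show ?case
    using cspan_add[OF cspan_scale[of "f i" X "c i"] insert.IH] by simp
qed

lemma cspan_diff:
  assumes "f \<in> cspan X" "g \<in> cspan X"
  shows "(\<lambda>u. f u - g u) \<in> cspan X"
  using cspan_add[OF assms(1) cspan_scale[OF assms(2), of "-1"]] by simp

lemma finite_bounded_lattice_points: "finite {x :: real^'d. x \<in> latN \<and> norm x \<le> C}"
proof -
  have "{x :: real^'d. x \<in> latN \<and> norm x \<le> C} \<subseteq> vec_lambda ` (UNIV \<rightarrow>\<^sub>E {k \<in> \<int>. \<bar>k\<bar> \<le> C})"
  proof
    fix x :: "real^'d" assume x: "x \<in> {x. x \<in> latN \<and> norm x \<le> C}"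
    have "vec_nth x \<in> UNIV \<rightarrow>\<^sub>E {k \<in> \<int>. \<bar>k\<bar> \<le> C}"
      using x component_le_norm_cart[of x] order_trans unfolding latN_def by fastforce
    then show "x \<in> vec_lambda ` (UNIV \<rightarrow>\<^sub>E {k \<in> \<int>. \<bar>k\<bar> \<le> C})"
      by (rule image_eqI[rotated]) (simp add: vec_nth_inverse)
  qed
  moreover have "finite ((UNIV :: 'd set) \<rightarrow>\<^sub>E {k :: real \<in> \<int>. \<bar>k\<bar> \<le> C})"
    by (intro finite_PiE finite_abs_int_segment) simp
  ultimately show ?thesis
    using finite_subset by blast
qed

lemma generates_lattice_nonempty:
  assumes "generates_lattice (A :: (real^'d) set)"
  shows "A \<noteq> {}"
proof
  assume "A = {}"
  have "axis i 1 \<in> latN" for i :: 'd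
    unfolding latN_def by (simp add: axis_def)
  then have "axis (undefined :: 'd) (1::real) = 0"
    using assms \<open>A = {}\<close> unfolding generates_lattice_def by force
  then show False
    by (simp add: axis_eq_0_iff)
qed

section \<open>The fan of a triangulation at height one\<close>

locale graded_triangulation =
  fixes A :: "(real^'d) set" and T :: "(real^'d) set set" and h :: "real^'d"
  assumes finite_A: "finite A"
    and height_A: "\<And>a. a \<in> A \<Longrightarrow> h \<bullet> a = 1"
    and triangulation: "is_triangulation A T"
    and T_nonempty: "T \<noteq> {}"
begin

lemma simplex_subset: "S \<in> T \<Longrightarrow> S \<subseteq> A"
  using triangulation unfolding is_triangulation_def by blast

lemma finite_simplex: "S \<in> T \<Longrightarrow> finite S"
  using simplex_subset finite_A finite_subset by blast

lemma finite_Union_T: "finite (\<Union>T)"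
  using simplex_subset finite_A by (meson Sup_least finite_subset)

lemma independent_simplex: "S \<in> T \<Longrightarrow> independent S"
  using triangulation simplex_subset height_A
  by (intro independent_if_affine_independent_in_hyperplane[of _ h])
     (auto simp: is_triangulation_def)

lemma simplex_coefficients_unique:
  "S \<in> T \<Longrightarrow> (\<Sum>s\<in>S. f s *\<^sub>R s) = (\<Sum>s\<in>S. g s *\<^sub>R s) \<Longrightarrow> s \<in> S \<Longrightarrow> f s = g s"
  using independent_coefficients_unique independent_simplex by blast

lemma conic_simplex_normalize:
  assumes "S \<in> T" "x \<in> conic S" "x \<noteq> 0"
  shows "0 < h \<bullet> x" "(1 / (h \<bullet> x)) *\<^sub>R x \<in> convex hull S"
proof -
  obtain c where c: "\<forall>a\<in>S. 0 \<le> c a" "x = (\<Sum>a\<in>S. c a *\<^sub>R a)"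
    using assms(2) by (rule conicE)
  have hx: "h \<bullet> x = sum c S"
    using c simplex_subset[OF assms(1)] height_A by (auto simp: inner_sum_right intro!: sum.cong)
  have "sum c S \<noteq> 0"
  proof
    assume "sum c S = 0"
    then have "\<forall>a\<in>S. c a = 0"
      using c(1) sum_nonneg_eq_0_iff[OF finite_simplex[OF assms(1)]] by blast
    then show False
      using c(2) assms(3) by simp
  qed
  moreover have "0 \<le> sum c S"
    using c(1) by (simp add: sum_nonneg)
  ultimately show pos: "0 < h \<bullet> x"
    using hx by linarith
  show "(1 / (h \<bullet> x)) *\<^sub>R x \<in> convex hull S"
    unfolding convex_hull_finite[OF finite_simplex[OF assms(1)]]
    using c pos hx
    by (intro CollectI exI[of _ "\<lambda>a. c a / (h \<bullet> x)"])
       (auto simp: scaleR_sum_right sum_divide_distrib[symmetric])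
qed

lemma conic_Int_simplices:
  assumes "S1 \<in> T" "S2 \<in> T"
  shows "conic S1 \<inter> conic S2 = conic (S1 \<inter> S2)"
proof
  show "conic (S1 \<inter> S2) \<subseteq> conic S1 \<inter> conic S2"
    using conic_mono finite_simplex assms by (meson Int_greatest inf_le1 inf_le2)
  show "conic S1 \<inter> conic S2 \<subseteq> conic (S1 \<inter> S2)"
  proof
    fix x assume x: "x \<in> conic S1 \<inter> conic S2"
    show "x \<in> conic (S1 \<inter> S2)"
    proof (cases "x = 0")
      case True
      then show ?thesis by (simp add: zero_in_conic)
    next
      case False
      have "(1 / (h \<bullet> x)) *\<^sub>R x \<in> convex hull S1 \<inter> convex hull S2"
        using conic_simplex_normalize(2) assms x False by blast
      also have "\<dots> = convex hull (S1 \<inter> S2)"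
        using triangulation assms unfolding is_triangulation_def by blast
      also have "\<dots> \<subseteq> conic (S1 \<inter> S2)"
        using convex_hull_subset_conic finite_simplex assms(1) by blast
      finally have "(1 / (h \<bullet> x)) *\<^sub>R x \<in> conic (S1 \<inter> S2)" .
      moreover have "0 < h \<bullet> x"
        using conic_simplex_normalize(1)[OF assms(1)] x False by blast
      ultimately show ?thesis
        using conic_scaleR[of "(1 / (h \<bullet> x)) *\<^sub>R x" "S1 \<inter> S2" "h \<bullet> x"] by simp
    qed
  qed
qed

lemma positive_combination_support:
  assumes "S1 \<in> T" "S2 \<in> T" "F \<subseteq> S1" "\<forall>s\<in>F. 0 < c s"
    and "(\<Sum>s\<in>F. c s *\<^sub>R s) \<in> conic S2"
  shows "F \<subseteq> S2"
proof
  fix s0 assume "s0 \<in> F"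
  have fin: "finite S1"
    using finite_simplex assms(1) .
  have "(\<Sum>s\<in>F. c s *\<^sub>R s) \<in> conic S1"
    using conicI[of F c] assms(4) conic_mono[OF fin assms(3)] by fastforce
  then have "(\<Sum>s\<in>F. c s *\<^sub>R s) \<in> conic (S1 \<inter> S2)"
    using conic_Int_simplices[OF assms(1,2)] assms(5) by blast
  then obtain e where "(\<Sum>s\<in>F. c s *\<^sub>R s) = (\<Sum>s\<in>S1 \<inter> S2. e s *\<^sub>R s)"
    by (rule conicE)
  moreover note sum_scaleR_extend[OF fin assms(3), of c] sum_scaleR_extend[OF fin, of "S1 \<inter> S2" e]
  ultimately have "(\<Sum>s\<in>S1. (if s \<in> F then c s else 0) *\<^sub>R s)
      = (\<Sum>s\<in>S1. (if s \<in> S1 \<inter> S2 then e s else 0) *\<^sub>R s)"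
    by simp
  from simplex_coefficients_unique[OF assms(1) this, of s0]
  have "c s0 = (if s0 \<in> S2 then e s0 else 0)"
    using \<open>s0 \<in> F\<close> assms(3) by auto
  then show "s0 \<in> S2"
    using \<open>s0 \<in> F\<close> assms(4) by (metis less_irrefl)
qed

lemma vertex_in_simplex:
  assumes "S1 \<in> T" "S2 \<in> T" "b \<in> S1" "b \<in> conic S2"
  shows "b \<in> S2"
  using positive_combination_support[OF assms(1,2), of "{b}" "\<lambda>_. 1"] assms(3,4) by simp

lemma conic_summand:
  assumes "S1 \<in> T" "S2 \<in> T" "x \<in> conic S1" "y \<in> conic S1" "x + y \<in> conic S2"
  shows "x \<in> conic S2"
proof -
  obtain a where a: "\<forall>s\<in>S1. 0 \<le> a s" "x = (\<Sum>s\<in>S1. a s *\<^sub>R s)"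
    using assms(3) by (rule conicE)
  obtain b where b: "\<forall>s\<in>S1. 0 \<le> b s" "y = (\<Sum>s\<in>S1. b s *\<^sub>R s)"
    using assms(4) by (rule conicE)
  define F where "F = {s \<in> S1. 0 < a s + b s}"
  have fin: "finite S1"
    using finite_simplex assms(1) .
  have F: "F \<subseteq> S1"
    unfolding F_def by blast
  have zero_outside: "a s = 0 \<and> b s = 0" if "s \<in> S1 - F" for s
    using that a(1) b(1) unfolding F_def by force
  have "x + y = (\<Sum>s\<in>S1. (a s + b s) *\<^sub>R s)"
    using a(2) b(2) by (simp add: scaleR_add_left sum.distrib)
  also have "\<dots> = (\<Sum>s\<in>F. (a s + b s) *\<^sub>R s)"
    using zero_outside by (intro sum.mono_neutral_right[OF fin F]) simp
  finally have "F \<subseteq> S2"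
    using positive_combination_support[OF assms(1,2) F, of "\<lambda>s. a s + b s"] assms(5)
    unfolding F_def by simp
  moreover have "x = (\<Sum>s\<in>F. a s *\<^sub>R s)"
    unfolding a(2) using zero_outside by (intro sum.mono_neutral_right[OF fin F]) simp
  then have "x \<in> conic F"
    using a(1) F conicI[of F a] by auto
  ultimately show ?thesis
    using conic_mono[OF finite_simplex[OF assms(2)]] by blast
qed

lemma ray_eq_conic: "ray s = conic {s}"
  unfolding conic_def ray_def by auto

lemma rays_fan: "{a \<in> A. ray a \<in> fan T} = \<Union>T"
proof
  show "\<Union>T \<subseteq> {a \<in> A. ray a \<in> fan T}"
    using simplex_subset unfolding fan_def ray_eq_conic by blast
  show "{a \<in> A. ray a \<in> fan T} \<subseteq> \<Union>T"
  proof safe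
    fix a assume a: "a \<in> A" "ray a \<in> fan T"
    then obtain \<tau> S where \<tau>: "ray a = conic \<tau>" "S \<in> T" "\<tau> \<subseteq> S"
      unfolding fan_def by blast
    have "a \<in> conic \<tau>"
      using \<tau>(1) unfolding ray_def by (auto intro!: exI[of _ 1])
    moreover have "a \<noteq> 0"
      using height_A[OF a(1)] by auto
    ultimately obtain s where s: "s \<in> \<tau>"
      unfolding conic_def by force
    have "finite \<tau>"
      using \<tau>(2,3) finite_simplex finite_subset by blast
    then have "s \<in> ray a"
      using \<tau>(1) s conic_inc by simp
    then obtain t where "s = t *\<^sub>R a"
      unfolding ray_def by blast
    moreover have "h \<bullet> s = 1"
      using height_A s \<tau>(2,3) simplex_subset by blast
    ultimately have "s = a"
      using height_A[OF a(1)] by simp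
    then show "a \<in> \<Union>T"
      using s \<tau> by blast
  qed
qed

definition same_cone :: "real^'d \<Rightarrow> real^'d \<Rightarrow> bool" where
  "same_cone x y \<longleftrightarrow> (\<exists>S\<in>T. x \<in> conic S \<and> y \<in> conic S)"

lemma common_cone_fan_iff: "(\<exists>\<sigma>\<in>fan T. x \<in> \<sigma> \<and> y \<in> \<sigma>) \<longleftrightarrow> same_cone x y"
  unfolding same_cone_def fan_def using conic_mono finite_simplex by blast

section \<open>Monomial spanning sets of \<open>R\<close> and \<open>M(\<beta>)\<close>\<close>

lemma fmul_fan_mono_right:
  "fmul (fan T) f (mono y) = (\<lambda>w. if same_cone (w - y) y then f (w - y) else 0)"
  unfolding fmul_mono_right common_cone_fan_iff ..

lemma fmul_fan_mono_mono:
  "fmul (fan T) (mono x) (mono y) = (if same_cone x y then mono (x + y) else (\<lambda>_. 0))"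
  unfolding fmul_mono_mono common_cone_fan_iff ..

lemma supp_fmul_fan:
  "supp (fmul (fan T) f g) \<subseteq> {x + y | x y. x \<in> supp f \<and> y \<in> supp g \<and> same_cone x y}"
  using supp_fmul[of "fan T" f g] unfolding common_cone_fan_iff .

definition nat_comb :: "(real^'d \<Rightarrow> nat) \<Rightarrow> real^'d" where
  "nat_comb \<nu> = (\<Sum>b\<in>A. real (\<nu> b) *\<^sub>R b)"

definition R_exponent :: "real^'d \<Rightarrow> bool" where
  "R_exponent y \<longleftrightarrow> (\<exists>\<nu>. \<exists>S\<in>T. {b. \<nu> b \<noteq> 0} \<subseteq> S \<and> y = nat_comb \<nu>)"

definition M_exponent :: "real^'d \<Rightarrow> real^'d \<Rightarrow> bool" where
  "M_exponent \<beta> w \<longleftrightarrow> (\<exists>g \<nu>. \<exists>S\<in>T. mono g \<in> Mgens A T \<beta> \<and> g \<in> conic S \<and>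
     {b. \<nu> b \<noteq> 0} \<subseteq> S \<and> w = g + nat_comb \<nu>)"

lemma nat_comb_add: "nat_comb \<nu>1 + nat_comb \<nu>2 = nat_comb (\<lambda>b. \<nu>1 b + \<nu>2 b)"
  unfolding nat_comb_def by (simp add: scaleR_add_left sum.distrib)

lemma nat_comb_unit:
  assumes "a \<in> A"
  shows "nat_comb ((\<lambda>_. 0)(a := n)) = real n *\<^sub>R a"
proof -
  have "nat_comb ((\<lambda>_. 0)(a := n)) = (\<Sum>b\<in>A. if b = a then real n *\<^sub>R b else 0)"
    unfolding nat_comb_def by (rule sum.cong) simp_all
  then show ?thesis
    using assms finite_A by simp
qed

lemma nat_comb_subset_sum:
  assumes "{b. \<nu> b \<noteq> 0} \<subseteq> S" "S \<subseteq> A"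
  shows "nat_comb \<nu> = (\<Sum>b\<in>S. real (\<nu> b) *\<^sub>R b)"
  unfolding nat_comb_def using assms finite_A by (intro sum.mono_neutral_right) auto

lemma nat_comb_in_conic: "S \<in> T \<Longrightarrow> {b. \<nu> b \<noteq> 0} \<subseteq> S \<Longrightarrow> nat_comb \<nu> \<in> conic S"
  using nat_comb_subset_sum[OF _ simplex_subset] conicI[of S "\<lambda>b. real (\<nu> b)"] by simp

lemma nat_comb_support:
  assumes "S \<in> T" "S' \<in> T" "{b. \<nu> b \<noteq> 0} \<subseteq> S" "nat_comb \<nu> \<in> conic S'"
  shows "{b. \<nu> b \<noteq> 0} \<subseteq> S'"
  using positive_combination_support[OF assms(1,2,3), of "\<lambda>b. real (\<nu> b)"] assms(3,4)
    nat_comb_subset_sum[of \<nu> "{b. \<nu> b \<noteq> 0}"] simplex_subset[OF assms(1)]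
  by auto

lemma nat_comb_remove: "a \<in> A \<Longrightarrow> nat_comb \<nu> = real (\<nu> a) *\<^sub>R a + nat_comb (\<nu>(a := 0))"
  unfolding nat_comb_def using finite_A
  by (simp add: sum.remove[of A a] sum.remove[of A a "\<lambda>b. real ((\<nu>(a := 0)) b) *\<^sub>R b"])

lemma nat_comb_vertex_sum: "nat_comb \<nu> = (\<Sum>(b, j)\<in>(SIGMA b:A. {..<\<nu> b}). b)"
proof -
  have "(\<Sum>(b, j)\<in>(SIGMA b:A. {..<\<nu> b}). b) = (\<Sum>b\<in>A. \<Sum>j<\<nu> b. b)"
    by (rule sum.Sigma[symmetric]) (simp_all add: finite_A)
  also have "\<dots> = nat_comb \<nu>"
    unfolding nat_comb_def by (simp only: sum_constant_scaleR card_lessThan)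
  finally show ?thesis ..
qed

lemma R_exponent_add:
  assumes "R_exponent x" "R_exponent y" "same_cone x y"
  shows "R_exponent (x + y)"
proof -
  obtain \<nu>1 S1 where 1: "S1 \<in> T" "{b. \<nu>1 b \<noteq> 0} \<subseteq> S1" "x = nat_comb \<nu>1"
    using assms(1) unfolding R_exponent_def by blast
  obtain \<nu>2 S2 where 2: "S2 \<in> T" "{b. \<nu>2 b \<noteq> 0} \<subseteq> S2" "y = nat_comb \<nu>2"
    using assms(2) unfolding R_exponent_def by blast
  obtain S where S: "S \<in> T" "x \<in> conic S" "y \<in> conic S"
    using assms(3) unfolding same_cone_def by blast
  have "{b. \<nu>1 b \<noteq> 0} \<subseteq> S" "{b. \<nu>2 b \<noteq> 0} \<subseteq> S"
    using nat_comb_support[OF 1(1) S(1) 1(2)] nat_comb_support[OF 2(1) S(1) 2(2)] 1(3) 2(3) S(2,3)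
    by simp_all
  then have "{b. \<nu>1 b + \<nu>2 b \<noteq> 0} \<subseteq> S"
    by auto
  then show ?thesis
    unfolding R_exponent_def 1(3) 2(3) nat_comb_add using S(1)
    by (intro exI[of _ "\<lambda>b. \<nu>1 b + \<nu>2 b"] bexI[of _ S] conjI) simp_all
qed

lemma M_exponent_add:
  assumes "R_exponent x" "M_exponent \<beta> w" "same_cone x w"
  shows "M_exponent \<beta> (x + w)"
proof -
  obtain \<nu>1 S1 where 1: "S1 \<in> T" "{b. \<nu>1 b \<noteq> 0} \<subseteq> S1" "x = nat_comb \<nu>1"
    using assms(1) unfolding R_exponent_def by blast
  obtain g \<nu> S where 2: "S \<in> T" "mono g \<in> Mgens A T \<beta>" "g \<in> conic S" "{b. \<nu> b \<noteq> 0} \<subseteq> S"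
    "w = g + nat_comb \<nu>"
    using assms(2) unfolding M_exponent_def by blast
  obtain S' where S': "S' \<in> T" "x \<in> conic S'" "w \<in> conic S'"
    using assms(3) unfolding same_cone_def by blast
  have \<nu>S: "nat_comb \<nu> \<in> conic S"
    using nat_comb_in_conic[OF 2(1,4)] .
  have "g \<in> conic S'"
    using conic_summand[OF 2(1) S'(1) 2(3) \<nu>S] S'(3) 2(5) by simp
  moreover have "nat_comb \<nu> \<in> conic S'"
    using conic_summand[OF 2(1) S'(1) \<nu>S 2(3)] S'(3) 2(5) by (simp add: add.commute)
  then have "{b. \<nu>1 b + \<nu> b \<noteq> 0} \<subseteq> S'"
    using nat_comb_support[OF 2(1) S'(1) 2(4)] nat_comb_support[OF 1(1) S'(1) 1(2)] 1(3) S'(2)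
    by auto
  moreover have "x + w = g + nat_comb (\<lambda>b. \<nu>1 b + \<nu> b)"
    unfolding 1(3) 2(5) nat_comb_add[symmetric] by (simp add: add.left_commute)
  ultimately show ?thesis
    unfolding M_exponent_def using S'(1) 2(2)
    by (intro exI[of _ g] exI[of _ "\<lambda>b. \<nu>1 b + \<nu> b"] bexI[of _ S'] conjI) simp_all
qed

lemma supp_Rring: "r \<in> Rring A (fan T) \<Longrightarrow> finite (supp r) \<and> supp r \<subseteq> Collect R_exponent"
proof (induction rule: Rring.induct)
  case one
  obtain S where "S \<in> T"
    using T_nonempty by blast
  then have "R_exponent (nat_comb (\<lambda>_. 0))"
    unfolding R_exponent_def by auto
  then show ?case
    by (simp add: supp_mono nat_comb_def)
next
  case (gen a)
  then have "a \<in> \<Union>T"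
    using rays_fan by blast
  then obtain S where "S \<in> T" "{b. ((\<lambda>_. 0)(a := 1::nat)) b \<noteq> 0} \<subseteq> S"
    by auto
  then have "R_exponent (nat_comb ((\<lambda>_. 0)(a := 1)))"
    unfolding R_exponent_def by blast
  then show ?case
    using gen(1) by (simp add: supp_mono nat_comb_unit)
next
  case (add f g)
  then show ?case
    using supp_add[of f g] finite_subset[OF supp_add[of f g]] by blast
next
  case (smult f c)
  then show ?case
    using supp_scale[of c f] finite_subset[OF supp_scale[of c f]] by blast
next
  case (mult f g)
  have "supp (fmul (fan T) f g) \<subseteq> Collect R_exponent"
  proof
    fix w assume "w \<in> supp (fmul (fan T) f g)"
    then obtain x y where "x \<in> supp f" "y \<in> supp g" "same_cone x y" "w = x + y"
      using supp_fmul_fan by blast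
    then show "w \<in> Collect R_exponent"
      using mult.IH R_exponent_add by blast
  qed
  then show ?case
    using finite_supp_fmul mult.IH by blast
qed

lemma Mgens_monomial:
  assumes "m \<in> Mgens A T \<beta>"
  shows "m = (\<lambda>_. 0) \<or> (\<exists>g. \<exists>S\<in>T. g \<in> conic S \<and> m = mono g)"
proof -
  obtain v xs where m: "m = fmul (fan T) (mono v) (lprod (fan T) (map mono xs))"
    using assms unfolding Mgens_def by blast
  consider "lprod (fan T) (map mono xs) = (\<lambda>_. 0)" | y where "lprod (fan T) (map mono xs) = mono y"
    using lprod_monos by blast
  then show ?thesis
  proof cases
    case 1
    then show ?thesis
      using m by (simp add: fmul_zero_right)
  next
    case (2 y)
    show ?thesis
    proof (cases "same_cone v y")
      case True
      then obtain S where "S \<in> T" "v \<in> conic S" "y \<in> conic S"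
        unfolding same_cone_def by blast
      moreover have "m = mono (v + y)"
        using m 2 True by (simp add: fmul_fan_mono_mono)
      ultimately show ?thesis
        using conic_add by blast
    next
      case False
      then show ?thesis
        using m 2 by (simp add: fmul_fan_mono_mono)
    qed
  qed
qed

lemma supp_Mbeta: "m \<in> Mbeta A T \<beta> \<Longrightarrow> finite (supp m) \<and> supp m \<subseteq> Collect (M_exponent \<beta>)"
proof (induction rule: Mbeta.induct)
  case (gen g)
  from Mgens_monomial[OF gen] show ?case
  proof
    assume "g = (\<lambda>_. 0)"
    then show ?thesis
      by (simp add: supp_def)
  next
    assume "\<exists>g'. \<exists>S\<in>T. g' \<in> conic S \<and> g = mono g'"
    then obtain g' S where g': "S \<in> T" "g' \<in> conic S" "g = mono g'"
      by blast
    then have "M_exponent \<beta> (g' + nat_comb (\<lambda>_. 0))"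
      unfolding M_exponent_def using gen
      by (intro exI[of _ g'] exI[of _ "\<lambda>_. 0"] bexI[of _ S] conjI) simp_all
    then show ?thesis
      using g'(3) by (simp add: supp_mono nat_comb_def)
  qed
next
  case zero
  then show ?case
    by (simp add: supp_def)
next
  case (add f g)
  then show ?case
    using supp_add[of f g] finite_subset[OF supp_add[of f g]] by blast
next
  case (rmult r f)
  have "supp (fmul (fan T) r f) \<subseteq> Collect (M_exponent \<beta>)"
  proof
    fix w assume "w \<in> supp (fmul (fan T) r f)"
    then obtain x y where "x \<in> supp r" "y \<in> supp f" "same_cone x y" "w = x + y"
      using supp_fmul_fan by blast
    then show "w \<in> Collect (M_exponent \<beta>)"
      using supp_Rring[OF rmult.hyps(1)] rmult.IH M_exponent_add by blast
  qed
  then show ?case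
    using finite_supp_fmul supp_Rring[OF rmult.hyps(1)] rmult.IH by blast
qed

lemma mono_add_vertex_in_Mbeta:
  assumes "mono x \<in> Mbeta A T \<beta>" "S \<in> T" "x \<in> conic S" "b \<in> S"
  shows "mono (x + b) \<in> Mbeta A T \<beta>"
proof -
  have "b \<in> {a \<in> A. ray a \<in> fan T}"
    unfolding rays_fan using assms(2,4) by blast
  then have "fmul (fan T) (mono b) (mono x) \<in> Mbeta A T \<beta>"
    using Mbeta.rmult[OF Rring.gen assms(1)] by blast
  moreover have "same_cone b x"
    unfolding same_cone_def using assms(2-4) conic_inc finite_simplex by blast
  ultimately show ?thesis
    by (simp add: fmul_fan_mono_mono add.commute)
qed

lemma mono_add_sum_in_Mbeta:
  assumes "mono x \<in> Mbeta A T \<beta>" "S \<in> T" "x \<in> conic S" "f ` P \<subseteq> S"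
  shows "mono (x + sum f P) \<in> Mbeta A T \<beta>"
  using assms(4)
proof (induction P rule: infinite_finite_induct)
  case (insert p P)
  have "sum f P \<in> conic S"
    using insert.prems finite_simplex[OF assms(2)] by (intro conic_sum conic_inc) auto
  then have "x + sum f P \<in> conic S"
    using assms(3) conic_add by blast
  then have "mono ((x + sum f P) + f p) \<in> Mbeta A T \<beta>"
    using mono_add_vertex_in_Mbeta[OF _ assms(2)] insert.IH insert.prems by simp
  then show ?case
    using insert.hyps by (simp add: add_ac)
qed (use assms(1) in simp_all)

lemma mono_M_exponent_in_Mbeta:
  assumes "M_exponent \<beta> w"
  shows "mono w \<in> Mbeta A T \<beta>"
proof -
  obtain g \<nu> S where w: "S \<in> T" "mono g \<in> Mgens A T \<beta>" "g \<in> conic S" "{b. \<nu> b \<noteq> 0} \<subseteq> S"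
    "w = g + nat_comb \<nu>"
    using assms unfolding M_exponent_def by blast
  have "(\<lambda>(b, j). b) ` (SIGMA b:A. {..<\<nu> b}) \<subseteq> S"
    using w(4) by auto
  then show ?thesis
    using mono_add_sum_in_Mbeta[OF Mbeta.gen[OF w(2)] w(1,3)] w(5) by (simp add: nat_comb_vertex_sum)
qed

lemma Zgen_fan: "Zgen A (fan T) i v = (if v \<in> \<Union>T then complex_of_real (v $ i) else 0)"
proof -
  have "Zgen A (fan T) i v = (\<Sum>a\<in>\<Union>T. if v = a then complex_of_real (a $ i) else 0)"
    unfolding Zgen_def rays_fan by (rule sum.cong) (simp_all add: mono_apply)
  then show ?thesis
    using finite_Union_T by simp
qed


section \<open>Reduction modulo \<open>(Z)M(\<beta>)\<close>\<close>

lemma sum_Zgen_mono_apply: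
  "(\<Sum>i\<in>UNIV. complex_of_real (\<psi> $ i) * fmul (fan T) (Zgen A (fan T) i) (mono p) w)
     = (if same_cone (w - p) p \<and> w - p \<in> \<Union>T then complex_of_real (\<psi> \<bullet> (w - p)) else 0)"
proof -
  define C where "C \<longleftrightarrow> same_cone (w - p) p \<and> w - p \<in> \<Union>T"
  have "fmul (fan T) (Zgen A (fan T) i) (mono p) w = (if C then complex_of_real ((w - p) $ i) else 0)" for i
    unfolding fmul_fan_mono_right Zgen_fan C_def by simp
  then show ?thesis
    unfolding C_def[symmetric] by (cases C) (simp_all add: inner_vec_def)
qed

lemma sum_Zgen_mono_eq:
  assumes "F \<subseteq> \<Union>T" "a \<in> F" "\<forall>b\<in>F. \<psi> \<bullet> b = (if b = a then 1 else 0)" "same_cone a p"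
  shows "(\<lambda>w. \<Sum>i\<in>UNIV. complex_of_real (\<psi> $ i) * fmul (fan T) (Zgen A (fan T) i) (mono p) w)
    = (\<lambda>w. mono (a + p) w
        + (\<Sum>b\<in>{b \<in> \<Union>T - F. same_cone b p}. complex_of_real (\<psi> \<bullet> b) * mono (b + p) w))"
proof
  fix w
  define N where "N = {b \<in> \<Union>T - F. same_cone b p}"
  have "finite N"
    unfolding N_def by (rule finite_subset[OF _ finite_Union_T]) blast
  have a: "a \<in> \<Union>T" "a \<notin> N"
    unfolding N_def using assms(1,2) by blast+
  note expand = sum_Zgen_mono_apply sum_mono_add_apply[OF \<open>finite N\<close>] mono_add_apply[of a p w]
  consider "w - p = a" | "w - p \<noteq> a" "w - p \<in> F" | "w - p \<notin> F"
    by blast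
  then have "(\<Sum>i\<in>UNIV. complex_of_real (\<psi> $ i) * fmul (fan T) (Zgen A (fan T) i) (mono p) w)
    = mono (a + p) w + (\<Sum>b\<in>N. complex_of_real (\<psi> \<bullet> b) * mono (b + p) w)"
  proof cases
    case 1
    moreover have "\<psi> \<bullet> a = 1"
      using assms(2,3) by simp
    ultimately show ?thesis
      using a assms(4) by (simp add: expand)
  next
    case 2
    moreover have "w - p \<notin> N"
      using 2(2) unfolding N_def by blast
    moreover have "\<psi> \<bullet> (w - p) = 0"
      using 2 assms(3) by simp
    ultimately show ?thesis
      by (simp add: expand)
  next
    case 3
    then have "w - p \<in> N \<longleftrightarrow> same_cone (w - p) p \<and> w - p \<in> \<Union>T"
      unfolding N_def by blast
    then show ?thesis
      using 3 assms(2) by (auto simp: expand)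
  qed
  then show "(\<Sum>i\<in>UNIV. complex_of_real (\<psi> $ i) * fmul (fan T) (Zgen A (fan T) i) (mono p) w)
    = mono (a + p) w
      + (\<Sum>b\<in>{b \<in> \<Union>T - F. same_cone b p}. complex_of_real (\<psi> \<bullet> b) * mono (b + p) w)"
    unfolding N_def .
qed

lemma mono_shift_in_ZM:
  assumes "mono p \<in> Mbeta A T \<beta>" "S \<in> T" "F \<subseteq> S" "a \<in> F" "p \<in> conic S"
    and neighbours: "\<And>b. b \<in> \<Union>T - F \<Longrightarrow> same_cone b p \<Longrightarrow> mono (b + p) \<in> ZM A T \<beta>"
  shows "mono (a + p) \<in> ZM A T \<beta>"
proof -
  let ?X = "{fmul (fan T) (Zgen A (fan T) i) m | i m. m \<in> Mbeta A T \<beta>}"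
  obtain \<psi> where \<psi>: "\<forall>b\<in>F. \<psi> \<bullet> b = (if b = a then 1 else 0)"
    using independent_dual_vector[OF independent_mono[OF independent_simplex[OF assms(2)] assms(3)]]
    by blast
  have "same_cone a p"
    unfolding same_cone_def using assms(2-5) conic_inc finite_simplex by blast
  have "F \<subseteq> \<Union>T"
    using assms(2,3) by blast
  note relation = sum_Zgen_mono_eq[OF this assms(4) \<psi> \<open>same_cone a p\<close>]
  define N where "N = {b \<in> \<Union>T - F. same_cone b p}"
  have "finite N"
    unfolding N_def by (rule finite_subset[OF _ finite_Union_T]) blast
  have "(\<lambda>w. \<Sum>i\<in>UNIV. complex_of_real (\<psi> $ i) * fmul (fan T) (Zgen A (fan T) i) (mono p) w)
      \<in> cspan ?X"
    using assms(1) by (intro cspan_sum cspan_base) (simp, blast)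
  moreover have "(\<lambda>w. \<Sum>b\<in>N. complex_of_real (\<psi> \<bullet> b) * mono (b + p) w) \<in> cspan ?X"
    using \<open>finite N\<close> neighbours unfolding N_def ZM_def by (intro cspan_sum) simp_all
  ultimately have "(\<lambda>w. mono (a + p) w + (\<Sum>b\<in>N. complex_of_real (\<psi> \<bullet> b) * mono (b + p) w)
      - (\<Sum>b\<in>N. complex_of_real (\<psi> \<bullet> b) * mono (b + p) w)) \<in> cspan ?X"
    unfolding N_def relation
    by (rule cspan_diff)
  then show ?thesis
    unfolding ZM_def by simp
qed

lemma card_insert_in_simplex:
  assumes "S \<in> T" "insert b F \<subseteq> S" "b \<notin> F"
  shows "card (insert b F) = Suc (card F)" "Suc (card F) \<le> card A"
proof -
  have "F \<subseteq> S"
    using assms(2) by blast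
  then have "finite F"
    using finite_simplex[OF assms(1)] finite_subset by blast
  then show "card (insert b F) = Suc (card F)"
    using assms(3) by simp
  moreover have "insert b F \<subseteq> A"
    using assms(2) simplex_subset[OF assms(1)] by blast
  then have "card (insert b F) \<le> card A"
    by (rule card_mono[OF finite_A])
  ultimately show "Suc (card F) \<le> card A"
    by simp
qed

lemma mono_in_ZM_if_neighbours_in_ZM:
  assumes "S \<in> T" "F \<subseteq> S" "a \<in> F" "\<forall>s\<in>F. 0 < c s"
    and "u + real m *\<^sub>R a = (\<Sum>s\<in>F. c s *\<^sub>R s)" "mono u \<in> Mbeta A T \<beta>" "u \<in> conic S"
    and neighbours: "\<And>b S'. S' \<in> T \<Longrightarrow> b \<notin> F \<Longrightarrow> insert b F \<subseteq> S' \<Longrightarrow> u \<in> conic S'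
      \<Longrightarrow> mono (b + (u + real m *\<^sub>R a)) \<in> ZM A T \<beta>"
  shows "mono (u + real (Suc m) *\<^sub>R a) \<in> ZM A T \<beta>"
proof -
  let ?p = "u + real m *\<^sub>R a"
  have "a \<in> S"
    using assms(2,3) by blast
  then have ma: "real m *\<^sub>R a \<in> conic S"
    using conic_scaleR[OF conic_inc[OF finite_simplex[OF assms(1)]]] by simp
  have "mono (u + sum (\<lambda>_. a) {..<m}) \<in> Mbeta A T \<beta>"
    by (rule mono_add_sum_in_Mbeta[OF assms(6,1,7)]) (use \<open>a \<in> S\<close> in auto)
  then have "mono ?p \<in> Mbeta A T \<beta>"
    by (simp only: sum_constant_scaleR card_lessThan)
  moreover have "?p \<in> conic S"
    using conic_add[OF assms(7) ma] .
  moreover have "mono (b + ?p) \<in> ZM A T \<beta>" if b: "b \<in> \<Union>T - F" "same_cone b ?p" for b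
  proof -
    obtain S' where S': "S' \<in> T" "b \<in> conic S'" "?p \<in> conic S'"
      using b(2) unfolding same_cone_def by blast
    obtain S'' where "S'' \<in> T" "b \<in> S''"
      using b(1) by blast
    then have "b \<in> S'"
      using vertex_in_simplex S'(1,2) by blast
    moreover have "F \<subseteq> S'"
      using positive_combination_support[OF assms(1) S'(1) assms(2,4)] S'(3) assms(5) by simp
    moreover have "u \<in> conic S'"
      using conic_summand[OF assms(1) S'(1) assms(7) ma S'(3)] .
    ultimately show ?thesis
      using neighbours S'(1) b(1) by blast
  qed
  ultimately have "mono (a + ?p) \<in> ZM A T \<beta>"
    using mono_shift_in_ZM[OF _ assms(1,2,3)] by blast
  moreover have "a + ?p = u + real (Suc m) *\<^sub>R a"
    by (simp add: algebra_simps)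
  ultimately show ?thesis
    by simp
qed

text \<open>\<open>k\<close> bounds how many vertices the support \<open>F\<close> can still gain inside a simplex; each
  step adds one vertex to \<open>F\<close> and uses up one copy of \<open>a\<close>.\<close>

lemma mono_in_ZM_descent:
  assumes "S \<in> T" "F \<subseteq> S" "a \<in> F" "\<forall>s\<in>F. 0 < c s"
    and "u + real m *\<^sub>R a = (\<Sum>s\<in>F. c s *\<^sub>R s)" "mono u \<in> Mbeta A T \<beta>" "u \<in> conic S"
    and "k \<le> m" "real k + 1 \<le> c a" "card A \<le> card F + k"
  shows "mono (u + real (Suc m) *\<^sub>R a) \<in> ZM A T \<beta>"
  using assms
proof (induction k arbitrary: S F c u m)
  case 0
  show ?case
  proof (rule mono_in_ZM_if_neighbours_in_ZM[OF 0(1-7)])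
    fix b S' assume "S' \<in> T" "insert b F \<subseteq> S'" "b \<notin> F"
    from card_insert_in_simplex(2)[OF this] show "mono (b + (u + real m *\<^sub>R a)) \<in> ZM A T \<beta>"
      using 0(10) by simp
  qed
next
  case (Suc k)
  obtain m' where m': "m = Suc m'"
    using Suc.prems(8) Suc_le_D by blast
  show ?case
  proof (rule mono_in_ZM_if_neighbours_in_ZM[OF Suc.prems(1-7)])
    fix b S' assume S': "S' \<in> T" "b \<notin> F" "insert b F \<subseteq> S'" "u \<in> conic S'"
    have finF: "finite F"
      using Suc.prems(1,2) finite_simplex finite_subset by blast
    have ab: "a \<noteq> b"
      using Suc.prems(3) S'(2) by blast
    define c' where "c' = c(a := c a - 1, b := 1)"
    have "(u + b) + real m' *\<^sub>R a = (\<Sum>s\<in>insert b F. c' s *\<^sub>R s)"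
      unfolding c'_def sum_scaleR_exchange[OF finF Suc.prems(3) S'(2)] Suc.prems(5)[symmetric] m'
      by (simp add: algebra_simps)
    then have "mono ((u + b) + real (Suc m') *\<^sub>R a) \<in> ZM A T \<beta>"
    proof (rule Suc.IH[OF S'(1,3), rotated 2])
      show "a \<in> insert b F"
        using Suc.prems(3) by blast
      show "\<forall>s\<in>insert b F. 0 < c' s"
        unfolding c'_def using Suc.prems(4,9) ab by auto
      show "mono (u + b) \<in> Mbeta A T \<beta>"
        using mono_add_vertex_in_Mbeta[OF Suc.prems(6) S'(1,4)] S'(3) by blast
      show "u + b \<in> conic S'"
        using conic_add[OF S'(4) conic_inc[OF finite_simplex[OF S'(1)]]] S'(3) by blast
      show "k \<le> m'" "real k + 1 \<le> c' a" "card A \<le> card (insert b F) + k"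
        unfolding c'_def using Suc.prems(8-10) ab card_insert_in_simplex(1)[OF S'(1,3,2)] m' by auto
    qed
    then show "mono (b + (u + real m *\<^sub>R a)) \<in> ZM A T \<beta>"
      unfolding m' by (simp add: algebra_simps)
  qed
qed

section \<open>Finiteness\<close>

lemma finite_Box: "finite (Box T)"
proof (rule finite_subset[OF _ finite_bounded_lattice_points])
  show "Box T \<subseteq> {x. x \<in> latN \<and> norm x \<le> (\<Sum>a\<in>A. norm a)}"
  proof
    fix v assume v: "v \<in> Box T"
    then obtain S q where S: "S \<in> T" "\<forall>a\<in>S. 0 \<le> q a \<and> q a < 1" "v = (\<Sum>a\<in>S. q a *\<^sub>R a)"
      unfolding Box_def by blast
    have "norm v \<le> (\<Sum>a\<in>S. norm (q a *\<^sub>R a))"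
      unfolding S(3) by (rule norm_sum)
    also have "\<dots> \<le> (\<Sum>a\<in>S. norm a)"
      using S(2) by (intro sum_mono) (auto intro!: mult_left_le_one_le)
    also have "\<dots> \<le> (\<Sum>a\<in>A. norm a)"
      using simplex_subset[OF S(1)] finite_A by (intro sum_mono2) auto
    finally show "v \<in> {x. x \<in> latN \<and> norm x \<le> (\<Sum>a\<in>A. norm a)}"
      using v unfolding Box_def by blast
  qed
qed

lemma finite_Mgens: "finite (Mgens A T \<beta>)"
proof -
  let ?gen = "\<lambda>(v, xs). fmul (fan T) (mono v) (lprod (fan T) (map mono xs))"
  have "Mgens A T \<beta> \<subseteq> ?gen ` (Box T \<times> {xs. set xs \<subseteq> A \<and> length xs \<le> card A})"
  proof
    fix m assume "m \<in> Mgens A T \<beta>"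
    then obtain v xs where m: "m = ?gen (v, xs)" "v \<in> Box T" "distinct xs" "set xs \<subseteq> A"
      unfolding Mgens_def by auto
    then have "length xs \<le> card A"
      using distinct_card card_mono[OF finite_A] by metis
    then show "m \<in> ?gen ` (Box T \<times> {xs. set xs \<subseteq> A \<and> length xs \<le> card A})"
      using m by blast
  qed
  moreover have "finite (Box T \<times> {xs. set xs \<subseteq> A \<and> length xs \<le> card A})"
    using finite_Box finite_lists_length_le[OF finite_A] by simp
  ultimately show ?thesis
    using finite_subset by blast
qed

text \<open>The bound \<open>Suc (card A)\<close> leaves enough copies of \<open>a\<close> for the \<open>card A\<close> steps of
  \<open>mono_in_ZM_descent\<close>.\<close>

definition small_exponents :: "real^'d \<Rightarrow> (real^'d) set" where
  "small_exponents \<beta> = (\<lambda>(g, \<nu>). g + nat_comb \<nu>) ` ({g. mono g \<in> Mgens A T \<beta>} \<times> (A \<rightarrow>\<^sub>E {..Suc (card A)}))"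

lemma finite_small_exponents: "finite (small_exponents \<beta>)"
proof -
  have "finite {g. mono g \<in> Mgens A T \<beta>}"
    using finite_vimageI[OF finite_Mgens inj_mono] by (simp add: vimage_def)
  then show ?thesis
    unfolding small_exponents_def using finite_A by (simp add: finite_PiE)
qed

lemma positive_representation:
  assumes "S \<in> T" "g \<in> conic S" "{b. \<nu> b \<noteq> 0} \<subseteq> S"
  obtains c where "\<forall>s\<in>S. real (\<nu> s) \<le> c s"
    and "g + nat_comb \<nu> = (\<Sum>s\<in>{s \<in> S. 0 < c s}. c s *\<^sub>R s)"
proof -
  obtain \<gamma> where \<gamma>: "\<forall>s\<in>S. 0 \<le> \<gamma> s" "g = (\<Sum>s\<in>S. \<gamma> s *\<^sub>R s)"
    using assms(2) by (rule conicE)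
  define c where "c s = \<gamma> s + real (\<nu> s)" for s
  have "g + nat_comb \<nu> = (\<Sum>s\<in>S. c s *\<^sub>R s)"
    unfolding c_def \<gamma>(2) nat_comb_subset_sum[OF assms(3) simplex_subset[OF assms(1)]]
    by (simp add: scaleR_add_left sum.distrib)
  also have "\<dots> = (\<Sum>s\<in>{s \<in> S. 0 < c s}. c s *\<^sub>R s)"
    using \<gamma>(1) finite_simplex[OF assms(1)] unfolding c_def
    by (intro sum.mono_neutral_right) (auto simp: not_less)
  finally show ?thesis
    using \<gamma>(1) that[of c] unfolding c_def by simp
qed

lemma not_small_exponentE:
  assumes "M_exponent \<beta> w" "w \<notin> small_exponents \<beta>"
  obtains g \<nu> S a where "S \<in> T" "mono g \<in> Mgens A T \<beta>" "g \<in> conic S" "{b. \<nu> b \<noteq> 0} \<subseteq> S"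
    and "w = g + nat_comb \<nu>" "a \<in> A" "Suc (card A) < \<nu> a"
proof -
  obtain g \<nu> S where w: "S \<in> T" "mono g \<in> Mgens A T \<beta>" "g \<in> conic S" "{b. \<nu> b \<noteq> 0} \<subseteq> S"
    "w = g + nat_comb \<nu>"
    using assms(1) unfolding M_exponent_def by blast
  have "\<exists>a\<in>A. Suc (card A) < \<nu> a"
  proof (rule ccontr)
    assume "\<not> (\<exists>a\<in>A. Suc (card A) < \<nu> a)"
    then have "restrict \<nu> A \<in> A \<rightarrow>\<^sub>E {..Suc (card A)}"
      by (auto simp: not_less)
    moreover have "nat_comb (restrict \<nu> A) = nat_comb \<nu>"
      unfolding nat_comb_def by (rule sum.cong) simp_all
    ultimately have "w \<in> small_exponents \<beta>"
      unfolding small_exponents_def w(5) using w(2)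
      by (intro image_eqI[of _ _ "(g, restrict \<nu> A)"]) simp_all
    then show False
      using assms(2) by blast
  qed
  then show ?thesis
    using that w by blast
qed

lemma mono_in_ZM_if_not_small:
  assumes "M_exponent \<beta> w" "w \<notin> small_exponents \<beta>"
  shows "mono w \<in> ZM A T \<beta>"
proof -
  obtain g \<nu> S a where w: "S \<in> T" "mono g \<in> Mgens A T \<beta>" "g \<in> conic S" "{b. \<nu> b \<noteq> 0} \<subseteq> S"
    "w = g + nat_comb \<nu>" "a \<in> A" "Suc (card A) < \<nu> a"
    using assms by (rule not_small_exponentE)
  have aS: "a \<in> S"
    using w(4,7) by auto
  define \<nu>' where "\<nu>' = \<nu>(a := \<nu> a - 1)"
  have "{b. \<nu>' b \<noteq> 0} \<subseteq> S"
    using w(4) aS unfolding \<nu>'_def by auto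
  then obtain c where c: "\<forall>s\<in>S. real (\<nu>' s) \<le> c s"
    and c_sum: "g + nat_comb \<nu>' = (\<Sum>s\<in>{s \<in> S. 0 < c s}. c s *\<^sub>R s)"
    using positive_representation[OF w(1,3)] by blast
  define F where "F = {s \<in> S. 0 < c s}"
  define u where "u = g + nat_comb (\<nu>(a := 0))"
  have c_a: "real (card A) + 1 \<le> c a"
    using c aS w(7) unfolding \<nu>'_def by force
  have u_sum: "u + real (\<nu> a - 1) *\<^sub>R a = (\<Sum>s\<in>F. c s *\<^sub>R s)"
    using nat_comb_remove[OF w(6), of \<nu>'] c_sum unfolding u_def \<nu>'_def F_def by (simp add: ac_simps)
  have supp_u: "{b. (\<nu>(a := 0)) b \<noteq> 0} \<subseteq> S"
    using w(4) by auto
  then have "M_exponent \<beta> u"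
    unfolding M_exponent_def u_def using w(1-3)
    by (intro exI[of _ g] exI[of _ "\<nu>(a := 0)"] bexI[of _ S] conjI) simp_all
  then have "mono u \<in> Mbeta A T \<beta>"
    by (rule mono_M_exponent_in_Mbeta)
  moreover have "u \<in> conic S"
    unfolding u_def using conic_add[OF w(3) nat_comb_in_conic[OF w(1) supp_u]] .
  moreover have "a \<in> F" "F \<subseteq> S" "\<forall>s\<in>F. 0 < c s"
    using c_a aS unfolding F_def by auto
  ultimately have "mono (u + real (Suc (\<nu> a - 1)) *\<^sub>R a) \<in> ZM A T \<beta>"
    using mono_in_ZM_descent[OF w(1) _ _ _ u_sum, where k = "card A"] w(7) c_a by simp
  moreover have "u + real (Suc (\<nu> a - 1)) *\<^sub>R a = w"
    using w(7) nat_comb_remove[OF w(6), of \<nu>] unfolding u_def w(5) by (simp add: algebra_simps)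
  ultimately show ?thesis
    by simp
qed

theorem fin_dim_quotient_Mbeta: "fin_dim_quotient (Mbeta A T \<beta>) (ZM A T \<beta>)"
proof -
  define B where "B = mono ` (small_exponents \<beta> \<inter> Collect (M_exponent \<beta>))"
  have "finite B"
    unfolding B_def using finite_small_exponents by simp
  moreover have "B \<subseteq> Mbeta A T \<beta>"
    unfolding B_def using mono_M_exponent_in_Mbeta by blast
  moreover have "\<exists>b\<in>cspan B. (\<lambda>u. m u - b u) \<in> ZM A T \<beta>" if m: "m \<in> Mbeta A T \<beta>" for m
  proof -
    have fin: "finite (supp m)" and exps: "supp m \<subseteq> Collect (M_exponent \<beta>)"
      using supp_Mbeta[OF m] by blast+
    define b where "b = (\<lambda>u. \<Sum>w\<in>supp m \<inter> small_exponents \<beta>. m w * mono w u)"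
    have "b \<in> cspan B"
      unfolding b_def B_def using fin exps by (intro cspan_sum cspan_base) auto
    moreover have "(\<lambda>u. m u - b u) = (\<lambda>u. \<Sum>w\<in>supp m - small_exponents \<beta>. m w * mono w u)"
      by (subst finite_supp_expansion[OF fin]) (simp add: b_def sum.Int_Diff[OF fin, of _ "small_exponents \<beta>"])
    moreover have "\<dots> \<in> ZM A T \<beta>"
      using fin exps mono_in_ZM_if_not_small unfolding ZM_def by (intro cspan_sum) auto
    ultimately show ?thesis
      by (intro bexI[of _ b]) simp_all
  qed
  ultimately show ?thesis
    unfolding fin_dim_quotient_def by blast
qed

end

theorem proposition2p16:
  fixes A :: "(real^'d) set" and T :: "(real^'d) set set"
    and h :: "real^'d" and \<beta> :: "real^'d"
  assumes "finite A" and "A \<subseteq> latN" and "generates_lattice A"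
    and "h \<in> latN" and "\<forall>a\<in>A. h \<bullet> a = 1"
    and "is_regular_triangulation A T"
    and "\<beta> \<in> latN"
  shows "fin_dim_quotient (Mbeta A T \<beta>) (ZM A T \<beta>)"
proof -
  have triangulation: "is_triangulation A T"
    using assms(6) unfolding is_regular_triangulation_def by blast
  have "convex hull A \<noteq> {}"
    using generates_lattice_nonempty[OF assms(3)] by simp
  then have "T \<noteq> {}"
    using triangulation unfolding is_triangulation_def by (metis SUP_empty)
  then interpret graded_triangulation A T h
    using assms(1,5) triangulation by unfold_locales auto
  show ?thesis
    by (rule fin_dim_quotient_Mbeta)
qed

end
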